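(* Let $n\ge1$, $k\ge2$, $0<\rho<1$, and $m\in\{j/2^n:0\le j\le2^n\}$. Let $Y^1,\dots,Y^k\in\{0,1\}^n$ be $\rho$-correlated uniform binary strings. Then among all Boolean functions $f:\{0,1\}^n\to\{0,1\}$ with $\mathbb{E} f=m$, the agreement probability $\mathbb{P}(f(Y^1)=\cdots=f(Y^k))$ is maximized by some monotone function.
   Context: $\{0,1\}^n$ carries the uniform measure. $Y^1,\dots,Y^k$ are $\rho$-correlated if $Y^i=X+Z^i$ (mod 2 coordinatewise), where $X$ is uniform on $\{0,1\}^n$ and $Z^1,\dots,Z^k$ are independent of each other and of $X$, each with i.i.d. Bernoulli($\epsilon$) coordinates, $\epsilon=(1-\sqrt\rho)/2$. A function $f$ is monotone if $f(x)\le f(y)$ whenever $x_i\le y_i$ for all $i$. *)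

theory Defs
  imports Complex_Main "HOL-Library.FuncSet"
begin

text \<open>The Boolean cube \<open>{0,1}^n\<close>, represented as boolean lists of length n
  (True = 1, False = 0).\<close>
definition cube :: "nat \<Rightarrow> bool list set" where
  "cube n = {xs. length xs = n}"

definition xorv :: "bool list \<Rightarrow> bool list \<Rightarrow> bool list" where
  "xorv x z = map2 (\<noteq>) x z"

definition noise_weight :: "real \<Rightarrow> bool list \<Rightarrow> real" where
  "noise_weight eps z = prod_list (map (\<lambda>b. if b then eps else 1 - eps) z)"

definition cube_mean :: "nat \<Rightarrow> (bool list \<Rightarrow> bool) \<Rightarrow> real" where
  "cube_mean n f = (\<Sum>x\<in>cube n. (if f x then 1 else 0)) / 2 ^ n"

text \<open>\<open>P(f(Y^1) = ... = f(Y^k))\<close> for rho-correlated Y^i = X + Z^i,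
  X uniform, Z^1..Z^k independent with Bernoulli((1 - sqrt rho)/2) coordinates.\<close>
definition agree_prob :: "nat \<Rightarrow> nat \<Rightarrow> real \<Rightarrow> (bool list \<Rightarrow> bool) \<Rightarrow> real" where
  "agree_prob n k rho f =
     (let eps = (1 - sqrt rho) / 2 in
      \<Sum>x\<in>cube n. \<Sum>Z\<in>(PiE {..<k} (\<lambda>_. cube n)).
        (1 / 2 ^ n) * (\<Prod>i<k. noise_weight eps (Z i)) *
        (if (\<forall>i<k. \<forall>j<k. f (xorv x (Z i)) = f (xorv x (Z j))) then 1 else 0))"

definition monotone_cube :: "nat \<Rightarrow> (bool list \<Rightarrow> bool) \<Rightarrow> bool" where
  "monotone_cube n f \<longleftrightarrow>
     (\<forall>x\<in>cube n. \<forall>y\<in>cube n. (\<forall>i<n. x ! i \<le> y ! i) \<longrightarrow> f x \<le> f y)"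

end

theory Submission
  imports Defs
begin

text \<open>Compressing f along coordinate i replaces each one-dimensional section of f in direction i by
  its monotone rearrangement. This preserves the mean and cannot decrease the agreement probability:
  conditioned on all coordinates of \<open>X, Z\<^sup>1, \<dots>, Z\<^sup>k\<close> except the i-th, the agreement
  probability is \<open>\<Sum>\<^sub>a \<Sum>\<^sub>c \<Prod>\<^sub>l A\<^sub>l(a, c)\<close>, where \<open>A\<^sub>l(a, c)\<close> is the probability
  that the l-th section takes the value c at the noisy bit \<open>a + \<beta>\<^sub>l\<close>. As \<open>\<epsilon> \<le> 1/2\<close>,
  rearranging the sections replaces each pair \<open>A\<^sub>l(0, c), A\<^sub>l(1, c)\<close> by its minimum and maximum,
  and \<open>\<Prod> x\<^sub>l + \<Prod> y\<^sub>l \<le> \<Prod> max x\<^sub>l y\<^sub>l + \<Prod> min x\<^sub>l y\<^sub>l\<close> for nonnegative numbers.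
  Compressing a maximiser along all n coordinates gives a monotone maximiser.\<close>

lemma prod_indicator_eq:
  "finite A \<Longrightarrow> (\<Prod>x\<in>A. if P x then 1 else 0 :: 'a :: comm_semiring_1) = (if \<forall>x\<in>A. P x then 1 else 0)"
  by (cases "\<forall>x\<in>A. P x") (auto intro!: prod_zero)

lemma sum_orbit_average:
  fixes F :: "'s \<Rightarrow> 'a :: comm_semiring_1"
  assumes "finite G" "\<And>g. g \<in> G \<Longrightarrow> bij_betw (\<phi> g) D D"
  shows "of_nat (card G) * (\<Sum>s\<in>D. F s) = (\<Sum>s\<in>D. \<Sum>g\<in>G. F (\<phi> g s))"
proof -
  have "(\<Sum>s\<in>D. \<Sum>g\<in>G. F (\<phi> g s)) = (\<Sum>g\<in>G. \<Sum>s\<in>D. F (\<phi> g s))"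
    by (rule sum.swap)
  also have "\<dots> = (\<Sum>g\<in>G. \<Sum>s\<in>D. F s)"
    by (intro sum.cong refl sum.reindex_bij_betw assms(2))
  finally show ?thesis
    by simp
qed

lemma prod_add_prod_le_prod_max_add_prod_min:
  fixes a b :: "'i \<Rightarrow> 'a :: linordered_idom"
  assumes "finite L" "\<And>l. l \<in> L \<Longrightarrow> 0 \<le> a l" "\<And>l. l \<in> L \<Longrightarrow> 0 \<le> b l"
  shows "(\<Prod>l\<in>L. a l) + (\<Prod>l\<in>L. b l) \<le> (\<Prod>l\<in>L. max (a l) (b l)) + (\<Prod>l\<in>L. min (a l) (b l))"
  using assms
proof (induction L rule: finite_induct)
  case (insert l0 L)
  define A B M N where "A = (\<Prod>l\<in>L. a l)" and "B = (\<Prod>l\<in>L. b l)"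
    and "M = (\<Prod>l\<in>L. max (a l) (b l))" and "N = (\<Prod>l\<in>L. min (a l) (b l))"
  have IH: "A + B \<le> M + N"
    using insert by (simp add: A_def B_def M_def N_def)
  have "N \<le> A" "N \<le> B"
    using insert by (auto simp: A_def B_def N_def intro!: prod_mono)
  have "a l0 * A + b l0 * B \<le> max (a l0) (b l0) * M + min (a l0) (b l0) * N"
  proof (cases "b l0 \<le> a l0")
    case True
    then have "b l0 * (B - N) \<le> a l0 * (B - N)" "0 \<le> a l0 * (M + N - A - B)"
      using \<open>N \<le> B\<close> IH insert.prems by (auto intro: mult_right_mono)
    then show ?thesis
      using True by (simp add: algebra_simps)
  next
    case False
    then have "a l0 * (A - N) \<le> b l0 * (A - N)" "0 \<le> b l0 * (M + N - A - B)"
      using \<open>N \<le> A\<close> IH insert.prems by (auto intro: mult_right_mono)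
    then show ?thesis
      using False by (simp add: algebra_simps)
  qed
  then show ?case
    using insert by (simp add: A_def B_def M_def N_def)
qed simp

lemma finite_cube: "finite (cube n)"
  using finite_lists_length_eq[of "UNIV :: bool set" n] by (simp add: cube_def)

lemma card_cube: "card (cube n) = 2 ^ n"
  using card_lists_length_eq[of "UNIV :: bool set" n] by (simp add: cube_def)

lemma list_update_in_cube [simp]: "x[i := b] \<in> cube n \<longleftrightarrow> x \<in> cube n"
  by (simp add: cube_def)

lemma xorv_in_cube: "x \<in> cube n \<Longrightarrow> z \<in> cube n \<Longrightarrow> xorv x z \<in> cube n"
  by (simp add: xorv_def cube_def)

lemma xorv_list_update:
  "length x = length z \<Longrightarrow> xorv (x[i := a]) (z[i := b]) = (xorv x z)[i := (a \<noteq> b)]"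
  by (cases "i < length x") (auto intro!: nth_equalityI simp: xorv_def nth_list_update)

lemma cube_mean_cong: "(\<And>x. x \<in> cube n \<Longrightarrow> f x = g x) \<Longrightarrow> cube_mean n f = cube_mean n g"
  unfolding cube_mean_def by simp

lemma cube_mean_indicator: "S \<subseteq> cube n \<Longrightarrow> cube_mean n (\<lambda>x. x \<in> S) = card S / 2 ^ n"
  unfolding cube_mean_def by (simp add: sum.If_cases finite_cube Int_absorb1)

lemma agree_prob_cong:
  assumes "\<And>x. x \<in> cube n \<Longrightarrow> f x = g x"
  shows "agree_prob n k rho f = agree_prob n k rho g"
proof -
  have "f (xorv x (Z l)) = g (xorv x (Z l))"
    if "x \<in> cube n" "Z \<in> PiE {..<k} (\<lambda>_. cube n)" "l < k" for x Z l
    using that by (metis assms xorv_in_cube PiE_mem lessThan_iff)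
  then show ?thesis
    unfolding agree_prob_def Let_def by (intro sum.cong refl) auto
qed

definition flip_at :: "nat \<Rightarrow> bool \<Rightarrow> bool list \<Rightarrow> bool list" where
  "flip_at i b x = x[i := (x ! i \<noteq> b)]"

lemma flip_at_flip_at [simp]: "flip_at i b (flip_at i b x) = x"
  unfolding flip_at_def by (cases "i < length x"; cases b) (simp_all add: list_update_beyond)

lemma flip_at_in_cube [simp]: "flip_at i b x \<in> cube n \<longleftrightarrow> x \<in> cube n"
  by (simp add: flip_at_def)

lemma bij_betw_flip_at: "bij_betw (flip_at i b) (cube n) (cube n)"
  by (rule bij_betw_byWitness[where f' = "flip_at i b"]) auto

section \<open>Compression along one coordinate\<close>

definition mono_rearr :: "(bool \<Rightarrow> bool) \<Rightarrow> bool \<Rightarrow> bool" where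
  "mono_rearr h b = (if b then h False \<or> h True else h False \<and> h True)"

definition compress :: "nat \<Rightarrow> (bool list \<Rightarrow> bool) \<Rightarrow> bool list \<Rightarrow> bool" where
  "compress i f x = mono_rearr (\<lambda>b. f (x[i := b])) (x ! i)"

definition monotone_in_coord :: "nat \<Rightarrow> nat \<Rightarrow> (bool list \<Rightarrow> bool) \<Rightarrow> bool" where
  "monotone_in_coord n i f \<longleftrightarrow> (\<forall>x\<in>cube n. f (x[i := False]) \<le> f (x[i := True]))"

lemma compress_list_update:
  "i < length x \<Longrightarrow> compress i f (x[i := b]) = mono_rearr (\<lambda>b. f (x[i := b])) b"
  by (simp add: compress_def)

lemma compress_pair_count:
  fixes ind :: "bool \<Rightarrow> real"
  assumes "i < length x"
  shows "ind (compress i f x) + ind (compress i f (flip_at i True x))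
       = ind (f x) + ind (f (flip_at i True x))"
proof -
  have "x = x[i := x ! i]"
    by simp
  then show ?thesis
    using assms by (cases "x ! i"; cases "f (x[i := False])"; cases "f (x[i := True])")
      (auto simp: compress_def mono_rearr_def flip_at_def)
qed

lemma cube_mean_compress:
  assumes "i < n"
  shows "cube_mean n (compress i f) = cube_mean n f"
proof -
  let ?ind = "\<lambda>b. if b then 1 else 0 :: real"
  have flip: "(\<Sum>x\<in>cube n. g (flip_at i True x)) = (\<Sum>x\<in>cube n. g x)" for g :: "bool list \<Rightarrow> real"
    using sum.reindex_bij_betw[OF bij_betw_flip_at] by blast
  have "2 * (\<Sum>x\<in>cube n. ?ind (compress i f x))
      = (\<Sum>x\<in>cube n. ?ind (compress i f x) + ?ind (compress i f (flip_at i True x)))"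
    unfolding sum.distrib flip[of "\<lambda>x. ?ind (compress i f x)"] by simp
  also have "\<dots> = (\<Sum>x\<in>cube n. ?ind (f x) + ?ind (f (flip_at i True x)))"
    using assms by (intro sum.cong refl compress_pair_count) (simp add: cube_def)
  also have "\<dots> = 2 * (\<Sum>x\<in>cube n. ?ind (f x))"
    unfolding sum.distrib flip[of "\<lambda>x. ?ind (f x)"] by simp
  finally show ?thesis
    unfolding cube_mean_def by simp
qed

lemma monotone_in_coord_compress: "i < n \<Longrightarrow> monotone_in_coord n i (compress i f)"
  unfolding monotone_in_coord_def by (auto simp: compress_def mono_rearr_def cube_def)

lemma monotone_in_coord_compress_other:
  assumes "j \<noteq> i" "monotone_in_coord n j f"
  shows "monotone_in_coord n j (compress i f)"
  unfolding monotone_in_coord_def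
proof
  fix x assume "x \<in> cube n"
  then have "f (x[i := b, j := False]) \<le> f (x[i := b, j := True])" for b
    using assms(2) by (simp add: monotone_in_coord_def)
  then show "compress i f (x[j := False]) \<le> compress i f (x[j := True])"
    using assms(1) by (auto simp: compress_def mono_rearr_def list_update_swap)
qed

lemma monotone_cube_if_monotone_in_coords:
  assumes "\<And>i. i < n \<Longrightarrow> monotone_in_coord n i f"
  shows "monotone_cube n f"
  unfolding monotone_cube_def
proof (intro ballI impI)
  fix x y assume x: "x \<in> cube n" and y: "y \<in> cube n" and le: "\<forall>i<n. x ! i \<le> y ! i"
  define z where "z t = take t y @ drop t x" for t
  have z_cube: "z t \<in> cube n" for t
    using x y by (simp add: z_def cube_def)
  have z_nth: "z t ! j = (if j < t then y ! j else x ! j)" if "j < n" for t j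
    using x y that by (simp add: z_def cube_def nth_append min_def)
  have "f (z t) \<le> f (z (Suc t))" for t
  proof (cases "t < n \<and> x ! t \<noteq> y ! t")
    case True
    then have "\<not> x ! t" "y ! t"
      using le by auto
    with True z_cube have "(z t)[t := False] = z t" "(z t)[t := True] = z (Suc t)"
      by (auto intro!: nth_equalityI simp: z_nth nth_list_update cube_def less_Suc_eq split: if_splits)
    moreover have "f ((z t)[t := False]) \<le> f ((z t)[t := True])"
      using assms True z_cube by (simp add: monotone_in_coord_def)
    ultimately show ?thesis
      by simp
  next
    case False
    then have "z t = z (Suc t)"
      using z_cube by (auto intro!: nth_equalityI simp: z_nth cube_def less_Suc_eq split: if_splits)
    then show ?thesis by simp
  qed
  then have "f (z 0) \<le> f (z n)"
    by (rule lift_Suc_mono_le) simp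
  moreover have "z 0 = x" "z n = y"
    using x y by (simp_all add: z_def cube_def)
  ultimately show "f x \<le> f y" by simp
qed

section \<open>Noisy sections\<close>

definition bit_weight :: "real \<Rightarrow> bool \<Rightarrow> real" where
  "bit_weight e b = (if b then e else 1 - e)"

definition hit_prob :: "real \<Rightarrow> (bool \<Rightarrow> bool) \<Rightarrow> bool \<Rightarrow> bool \<Rightarrow> real" where
  "hit_prob e h a c = (\<Sum>\<beta>\<in>UNIV. bit_weight e \<beta> * (if h (a \<noteq> \<beta>) = c then 1 else 0))"

lemma hit_prob_eq:
  "hit_prob e h a c = (1 - e) * (if h a = c then 1 else 0) + e * (if h (\<not> a) = c then 1 else 0)"
  by (simp add: hit_prob_def bit_weight_def UNIV_bool)

lemma hit_prob_nonneg: "0 \<le> e \<Longrightarrow> e \<le> 1 \<Longrightarrow> 0 \<le> hit_prob e h a c"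
  by (simp add: hit_prob_eq)

text \<open>This is where \<open>\<rho> > 0\<close>, i.e. \<open>e \<le> 1/2\<close>, is needed.\<close>

lemma hit_prob_mono_rearr:
  assumes "0 \<le> e" "e \<le> 1/2"
  shows "hit_prob e (mono_rearr h) False True = min (hit_prob e h False True) (hit_prob e h True True)"
    and "hit_prob e (mono_rearr h) True True = max (hit_prob e h False True) (hit_prob e h True True)"
    and "hit_prob e (mono_rearr h) False False = max (hit_prob e h False False) (hit_prob e h True False)"
    and "hit_prob e (mono_rearr h) True False = min (hit_prob e h False False) (hit_prob e h True False)"
  using assms by (cases "h False"; cases "h True"; simp add: hit_prob_eq mono_rearr_def)+

lemma sum_prod_hit_prob_le_mono_rearr:
  fixes h :: "nat \<Rightarrow> bool \<Rightarrow> bool"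
  assumes "0 \<le> e" "e \<le> 1/2"
  shows "(\<Sum>a\<in>UNIV. \<Sum>c\<in>UNIV. \<Prod>l<k. hit_prob e (h l) a c)
       \<le> (\<Sum>a\<in>UNIV. \<Sum>c\<in>UNIV. \<Prod>l<k. hit_prob e (mono_rearr (h l)) a c)"
proof -
  have nonneg: "0 \<le> hit_prob e (h l) a c" for l a c
    using assms by (intro hit_prob_nonneg) auto
  have "(\<Prod>l<k. hit_prob e (h l) False c) + (\<Prod>l<k. hit_prob e (h l) True c)
     \<le> (\<Prod>l<k. max (hit_prob e (h l) False c) (hit_prob e (h l) True c))
       + (\<Prod>l<k. min (hit_prob e (h l) False c) (hit_prob e (h l) True c))" for c
    by (rule prod_add_prod_le_prod_max_add_prod_min) (simp_all add: nonneg)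
  then have "(\<Prod>l<k. hit_prob e (h l) False c) + (\<Prod>l<k. hit_prob e (h l) True c)
     \<le> (\<Prod>l<k. hit_prob e (mono_rearr (h l)) False c) + (\<Prod>l<k. hit_prob e (mono_rearr (h l)) True c)"
    for c
    by (cases c) (simp_all add: hit_prob_mono_rearr[OF assms] add.commute)
  from this[of False] this[of True] show ?thesis
    by (simp add: UNIV_bool)
qed

section \<open>Conditioning on all but one coordinate\<close>

lemma noise_weight_append: "noise_weight e (xs @ ys) = noise_weight e xs * noise_weight e ys"
  by (simp add: noise_weight_def)

lemma noise_weight_nonneg: "0 \<le> e \<Longrightarrow> e \<le> 1 \<Longrightarrow> 0 \<le> noise_weight e z"
  unfolding noise_weight_def by (rule prod_list_nonneg) auto

lemma noise_weight_list_update: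
  "i < length z \<Longrightarrow>
    noise_weight e (z[i := b]) = bit_weight e b * noise_weight e (take i z @ drop (Suc i) z)"
  by (simp add: upd_conv_take_nth_drop noise_weight_append)
     (simp add: noise_weight_def bit_weight_def)

lemma all_equal_indicator_eq_sum_prod:
  fixes v :: "nat \<Rightarrow> bool"
  assumes "0 < k"
  shows "(if \<forall>l<k. \<forall>l'<k. v l = v l' then 1 else 0 :: real) = (\<Sum>c\<in>UNIV. \<Prod>l<k. if v l = c then 1 else 0)"
proof -
  have "(\<forall>l\<in>{..<k}. v l = c) \<longleftrightarrow> c = v 0 \<and> (\<forall>l<k. \<forall>l'<k. v l = v l')" for c
    using assms by auto
  then have "(\<Prod>l<k. if v l = c then 1 else 0 :: real) = (if c = v 0 \<and> (\<forall>l<k. \<forall>l'<k. v l = v l') then 1 else 0)" for c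
    by (simp only: prod_indicator_eq[OF finite_lessThan])
  then show ?thesis
    unfolding UNIV_bool by (cases "v 0") simp_all
qed

type_synonym sample = "bool list \<times> (nat \<Rightarrow> bool list)"

definition agree_space :: "nat \<Rightarrow> nat \<Rightarrow> sample set" where
  "agree_space n k = cube n \<times> PiE {..<k} (\<lambda>_. cube n)"

definition agree_term :: "nat \<Rightarrow> nat \<Rightarrow> real \<Rightarrow> (bool list \<Rightarrow> bool) \<Rightarrow> sample \<Rightarrow> real" where
  "agree_term n k e f s = 1 / 2 ^ n * (\<Prod>l<k. noise_weight e (snd s l)) *
     (if \<forall>l<k. \<forall>l'<k. f (xorv (fst s) (snd s l)) = f (xorv (fst s) (snd s l')) then 1 else 0)"

lemma agree_prob_eq_sum_agree_term:
  "agree_prob n k rho f = (\<Sum>s\<in>agree_space n k. agree_term n k ((1 - sqrt rho) / 2) f s)"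
  unfolding agree_prob_def agree_term_def agree_space_def Let_def sum.cartesian_product
  by (simp add: case_prod_beta)

lemma agree_space_memD:
  assumes "s \<in> agree_space n k"
  shows "fst s \<in> cube n" "\<And>l. l < k \<Longrightarrow> snd s l \<in> cube n" "snd s \<in> extensional {..<k}"
  using assms by (auto simp: agree_space_def PiE_def)

text \<open>Conditioning on the coordinates other than i is replaced by averaging over the group of flips
  of the i-th bits of \<open>X, Z\<^sup>1, \<dots>, Z\<^sup>k\<close>; the orbit of a sample consists of the samples obtained
  by setting these bits arbitrarily.\<close>

definition flip_group :: "nat \<Rightarrow> (bool \<times> (nat \<Rightarrow> bool)) set" where
  "flip_group k = UNIV \<times> PiE {..<k} (\<lambda>_. UNIV)"

definition flip_coord :: "nat \<Rightarrow> nat \<Rightarrow> bool \<times> (nat \<Rightarrow> bool) \<Rightarrow> sample \<Rightarrow> sample" where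
  "flip_coord i k g s = (flip_at i (fst g) (fst s), restrict (\<lambda>l. flip_at i (snd g l) (snd s l)) {..<k})"

definition set_coord :: "nat \<Rightarrow> nat \<Rightarrow> bool \<times> (nat \<Rightarrow> bool) \<Rightarrow> sample \<Rightarrow> sample" where
  "set_coord i k g s = ((fst s)[i := fst g], restrict (\<lambda>l. (snd s l)[i := snd g l]) {..<k})"

definition flipped_bits :: "nat \<Rightarrow> nat \<Rightarrow> sample \<Rightarrow> bool \<times> (nat \<Rightarrow> bool) \<Rightarrow> bool \<times> (nat \<Rightarrow> bool)" where
  "flipped_bits i k s g = (fst s ! i \<noteq> fst g, restrict (\<lambda>l. snd s l ! i \<noteq> snd g l) {..<k})"

lemma finite_flip_group: "finite (flip_group k)"
  unfolding flip_group_def by (intro finite_cartesian_product finite_PiE) auto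

lemma card_flip_group_pos: "0 < card (flip_group k)"
proof -
  have "(False, restrict (\<lambda>_. False) {..<k}) \<in> flip_group k"
    by (simp add: flip_group_def)
  then show ?thesis
    using finite_flip_group card_gt_0_iff by blast
qed

lemma flip_coord_in_agree_space: "s \<in> agree_space n k \<Longrightarrow> flip_coord i k g s \<in> agree_space n k"
  by (auto simp: agree_space_def flip_coord_def restrict_PiE_iff agree_space_memD)

lemma flip_coord_flip_coord:
  assumes "s \<in> agree_space n k"
  shows "flip_coord i k g (flip_coord i k g s) = s"
proof -
  have "restrict (\<lambda>l. flip_at i (snd g l) (restrict (\<lambda>l. flip_at i (snd g l) (snd s l)) {..<k} l)) {..<k}
      = restrict (snd s) {..<k}"
    by (rule restrict_ext) simp
  also have "\<dots> = snd s"
    using agree_space_memD(3)[OF assms] by (rule extensional_restrict)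
  finally show ?thesis
    by (simp add: flip_coord_def)
qed

lemma bij_betw_flip_coord: "bij_betw (flip_coord i k g) (agree_space n k) (agree_space n k)"
  by (rule bij_betw_byWitness[where f' = "flip_coord i k g"])
     (auto simp: flip_coord_flip_coord flip_coord_in_agree_space)

lemma flipped_bits_flipped_bits:
  assumes "g \<in> flip_group k"
  shows "flipped_bits i k s (flipped_bits i k s g) = g"
proof -
  have "restrict (\<lambda>l. snd s l ! i \<noteq> restrict (\<lambda>l. snd s l ! i \<noteq> snd g l) {..<k} l) {..<k}
      = restrict (snd g) {..<k}"
    by (rule restrict_ext) auto
  also have "\<dots> = snd g"
    using assms by (intro extensional_restrict) (auto simp: flip_group_def PiE_def)
  moreover have "(fst s ! i \<noteq> (fst s ! i \<noteq> fst g)) = fst g"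
    by auto
  ultimately show ?thesis
    by (simp add: flipped_bits_def)
qed

lemma flipped_bits_in_flip_group: "flipped_bits i k s g \<in> flip_group k"
  by (simp add: flipped_bits_def flip_group_def)

lemma bij_betw_flipped_bits: "bij_betw (flipped_bits i k s) (flip_group k) (flip_group k)"
  by (rule bij_betw_byWitness[where f' = "flipped_bits i k s"])
     (auto simp: flipped_bits_flipped_bits flipped_bits_in_flip_group)

lemma flip_coord_eq_set_coord: "flip_coord i k g s = set_coord i k (flipped_bits i k s g) s"
proof -
  have "restrict (\<lambda>l. flip_at i (snd g l) (snd s l)) {..<k}
      = restrict (\<lambda>l. (snd s l)[i := restrict (\<lambda>l. snd s l ! i \<noteq> snd g l) {..<k} l]) {..<k}"
    by (rule restrict_ext) (simp add: flip_at_def)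
  then show ?thesis
    by (simp add: flip_coord_def set_coord_def flipped_bits_def flip_at_def)
qed

lemma card_flip_group_mult_agree_prob:
  "card (flip_group k) * agree_prob n k rho f
    = (\<Sum>s\<in>agree_space n k. \<Sum>g\<in>flip_group k. agree_term n k ((1 - sqrt rho) / 2) f (set_coord i k g s))"
proof -
  have "card (flip_group k) * agree_prob n k rho f
      = (\<Sum>s\<in>agree_space n k. \<Sum>g\<in>flip_group k. agree_term n k ((1 - sqrt rho) / 2) f (flip_coord i k g s))"
    unfolding agree_prob_eq_sum_agree_term
    by (rule sum_orbit_average[OF finite_flip_group bij_betw_flip_coord])
  also have "\<dots> = (\<Sum>s\<in>agree_space n k. \<Sum>g\<in>flip_group k. agree_term n k ((1 - sqrt rho) / 2) f (set_coord i k g s))"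
    unfolding flip_coord_eq_set_coord
    by (intro sum.cong refl sum.reindex_bij_betw[OF bij_betw_flipped_bits])
  finally show ?thesis .
qed

lemma agree_term_set_coord:
  assumes s: "s \<in> agree_space n k" and "i < n" "0 < k"
  shows "agree_term n k e f (set_coord i k (a, B) s)
    = 1 / 2 ^ n * (\<Prod>l<k. noise_weight e (take i (snd s l) @ drop (Suc i) (snd s l))) *
      (\<Sum>c\<in>UNIV. \<Prod>l<k. bit_weight e (B l) *
         (if f ((xorv (fst s) (snd s l))[i := (a \<noteq> B l)]) = c then 1 else 0))"
proof -
  define R where "R l = noise_weight e (take i (snd s l) @ drop (Suc i) (snd s l))" for l
  define v where "v l = f ((xorv (fst s) (snd s l))[i := (a \<noteq> B l)])" for l
  have len: "length (fst s) = n" "\<And>l. l < k \<Longrightarrow> length (snd s l) = n"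
    using agree_space_memD[OF s] by (simp_all add: cube_def)
  have weight: "(\<Prod>l<k. noise_weight e (snd (set_coord i k (a, B) s) l)) = (\<Prod>l<k. bit_weight e (B l) * R l)"
    using len \<open>i < n\<close> by (intro prod.cong refl) (simp add: set_coord_def R_def noise_weight_list_update)
  have "xorv (fst (set_coord i k (a, B) s)) (snd (set_coord i k (a, B) s) l) = (xorv (fst s) (snd s l))[i := (a \<noteq> B l)]"
    if "l < k" for l
    using len that by (simp add: set_coord_def xorv_list_update)
  then have agree: "(\<forall>l<k. \<forall>l'<k. f (xorv (fst (set_coord i k (a, B) s)) (snd (set_coord i k (a, B) s) l))
        = f (xorv (fst (set_coord i k (a, B) s)) (snd (set_coord i k (a, B) s) l')))
      \<longleftrightarrow> (\<forall>l<k. \<forall>l'<k. v l = v l')"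
    by (simp add: v_def)
  have "agree_term n k e f (set_coord i k (a, B) s)
      = 1 / 2 ^ n * (\<Prod>l<k. bit_weight e (B l) * R l) * (if \<forall>l<k. \<forall>l'<k. v l = v l' then 1 else 0)"
    unfolding agree_term_def agree weight ..
  also have "\<dots> = 1 / 2 ^ n * (\<Prod>l<k. R l) * (\<Sum>c\<in>UNIV. \<Prod>l<k. bit_weight e (B l) * (if v l = c then 1 else 0))"
    by (simp add: all_equal_indicator_eq_sum_prod[OF \<open>0 < k\<close>] prod.distrib sum_distrib_left
        sum_divide_distrib mult_ac)
  finally show ?thesis
    by (simp add: R_def v_def)
qed

lemma sum_flip_group_agree_term_set_coord:
  assumes s: "s \<in> agree_space n k" and "i < n" "0 < k"
  shows "(\<Sum>g\<in>flip_group k. agree_term n k e f (set_coord i k g s))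
    = 1 / 2 ^ n * (\<Prod>l<k. noise_weight e (take i (snd s l) @ drop (Suc i) (snd s l))) *
      (\<Sum>a\<in>UNIV. \<Sum>c\<in>UNIV. \<Prod>l<k. hit_prob e (\<lambda>\<beta>. f ((xorv (fst s) (snd s l))[i := \<beta>])) a c)"
proof -
  define K where "K = 1 / 2 ^ n * (\<Prod>l<k. noise_weight e (take i (snd s l) @ drop (Suc i) (snd s l)))"
  define T where "T a c l \<beta> = bit_weight e \<beta> *
    (if f ((xorv (fst s) (snd s l))[i := (a \<noteq> \<beta>)]) = c then 1 else 0 :: real)" for a c l \<beta>
  have "(\<Sum>g\<in>flip_group k. agree_term n k e f (set_coord i k g s))
      = (\<Sum>a\<in>UNIV. \<Sum>B\<in>PiE {..<k} (\<lambda>_. UNIV). K * (\<Sum>c\<in>UNIV. \<Prod>l<k. T a c l (B l)))"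
    unfolding flip_group_def sum.cartesian_product'
    by (simp add: agree_term_set_coord[OF assms] K_def T_def)
  also have "\<dots> = (\<Sum>a\<in>UNIV. K * (\<Sum>c\<in>UNIV. \<Prod>l<k. \<Sum>\<beta>\<in>UNIV. T a c l \<beta>))"
    by (simp add: prod_sum_PiE sum_distrib_left sum.swap[of _ "PiE {..<k} (\<lambda>_. UNIV)"])
  finally show ?thesis
    by (simp add: K_def T_def hit_prob_def sum_distrib_left)
qed

lemma agree_prob_le_compress:
  assumes "i < n" "0 < k" "0 < rho" "rho < 1"
  shows "agree_prob n k rho f \<le> agree_prob n k rho (compress i f)"
proof -
  define e where "e = (1 - sqrt rho) / 2"
  have e: "0 \<le> e" "e \<le> 1/2"
    using assms by (auto simp: e_def)
  have "(\<Sum>g\<in>flip_group k. agree_term n k e f (set_coord i k g s))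
      \<le> (\<Sum>g\<in>flip_group k. agree_term n k e (compress i f) (set_coord i k g s))"
    if s: "s \<in> agree_space n k" for s
  proof -
    have "i < length (xorv (fst s) (snd s l))" if "l < k" for l
      using agree_space_memD[OF s] that \<open>i < n\<close> xorv_in_cube by (simp add: cube_def)
    then have sections: "(\<lambda>\<beta>. compress i f ((xorv (fst s) (snd s l))[i := \<beta>]))
        = mono_rearr (\<lambda>\<beta>. f ((xorv (fst s) (snd s l))[i := \<beta>]))" if "l < k" for l
      using that by (simp add: compress_list_update)
    have "(\<Sum>a\<in>UNIV. \<Sum>c\<in>UNIV. \<Prod>l<k. hit_prob e (\<lambda>\<beta>. f ((xorv (fst s) (snd s l))[i := \<beta>])) a c)
        \<le> (\<Sum>a\<in>UNIV. \<Sum>c\<in>UNIV. \<Prod>l<k. hit_prob e (\<lambda>\<beta>. compress i f ((xorv (fst s) (snd s l))[i := \<beta>])) a c)"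
      using sum_prod_hit_prob_le_mono_rearr[OF e] by (simp add: sections)
    moreover have "0 \<le> 1 / 2 ^ n * (\<Prod>l<k. noise_weight e (take i (snd s l) @ drop (Suc i) (snd s l)))"
      using e by (intro mult_nonneg_nonneg prod_nonneg noise_weight_nonneg) auto
    ultimately show ?thesis
      unfolding sum_flip_group_agree_term_set_coord[OF s assms(1,2)] by (rule mult_left_mono)
  qed
  then have "card (flip_group k) * agree_prob n k rho f \<le> card (flip_group k) * agree_prob n k rho (compress i f)"
    unfolding card_flip_group_mult_agree_prob[where i = i] e_def[symmetric] by (rule sum_mono)
  then show ?thesis
    using card_flip_group_pos by simp
qed

section \<open>Compression along all coordinates\<close>

primrec compress_upto :: "nat \<Rightarrow> (bool list \<Rightarrow> bool) \<Rightarrow> bool list \<Rightarrow> bool" where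
  "compress_upto 0 f = f"
| "compress_upto (Suc t) f = compress t (compress_upto t f)"

lemma cube_mean_compress_upto: "t \<le> n \<Longrightarrow> cube_mean n (compress_upto t f) = cube_mean n f"
  by (induction t) (simp_all add: cube_mean_compress)

lemma agree_prob_le_compress_upto:
  assumes "0 < k" "0 < rho" "rho < 1"
  shows "t \<le> n \<Longrightarrow> agree_prob n k rho f \<le> agree_prob n k rho (compress_upto t f)"
proof (induction t)
  case (Suc t)
  then show ?case
    using agree_prob_le_compress[OF _ assms, of t n "compress_upto t f"] by simp
qed simp

lemma monotone_in_coord_compress_upto:
  "j < t \<Longrightarrow> t \<le> n \<Longrightarrow> monotone_in_coord n j (compress_upto t f)"
proof (induction t)
  case (Suc t)
  then show ?case
    by (cases "j = t") (simp_all add: monotone_in_coord_compress monotone_in_coord_compress_other)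
qed simp

lemma monotone_cube_compress_upto: "monotone_cube n (compress_upto n f)"
  by (rule monotone_cube_if_monotone_in_coords) (simp add: monotone_in_coord_compress_upto)

lemma ex_maximizer_on_cube:
  fixes \<Phi> :: "(bool list \<Rightarrow> bool) \<Rightarrow> 'a :: linorder"
  assumes "P f1"
    and P_cong: "\<And>f g. (\<And>x. x \<in> cube n \<Longrightarrow> f x = g x) \<Longrightarrow> P f \<Longrightarrow> P g"
    and \<Phi>_cong: "\<And>f g. (\<And>x. x \<in> cube n \<Longrightarrow> f x = g x) \<Longrightarrow> \<Phi> f = \<Phi> g"
  obtains f0 where "P f0" "\<And>f. P f \<Longrightarrow> \<Phi> f \<le> \<Phi> f0"
proof -
  \<comment> \<open>only the finitely many restrictions of functions to the cube matter\<close>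
  define restr where "restr f x \<longleftrightarrow> x \<in> cube n \<and> f x" for f :: "bool list \<Rightarrow> bool" and x
  have restr_eq: "restr f x = f x" if "x \<in> cube n" for f x
    using that by (simp add: restr_def)
  define R where "R = restr ` {f. P f}"
  have "restr f \<in> (\<lambda>S x. x \<in> S) ` Pow (cube n)" for f
    by (rule image_eqI[of _ _ "{x \<in> cube n. f x}"]) (auto simp: restr_def)
  then have "finite R"
    unfolding R_def by (rule finite_subset[OF image_subsetI]) (simp add: finite_cube)
  moreover have "restr f1 \<in> R"
    using \<open>P f1\<close> by (simp add: R_def)
  ultimately have "Max (\<Phi> ` R) \<in> \<Phi> ` R" and max: "\<And>g. g \<in> R \<Longrightarrow> \<Phi> g \<le> Max (\<Phi> ` R)"
    by (auto intro!: Max_in)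
  then obtain f0 where "P f0" and f0: "\<Phi> (restr f0) = Max (\<Phi> ` R)"
    by (auto simp: R_def)
  show ?thesis
  proof
    show "P (restr f0)"
      using \<open>P f0\<close> by (rule P_cong[rotated]) (simp add: restr_eq)
    show "\<Phi> f \<le> \<Phi> (restr f0)" if "P f" for f
      using max[of "restr f"] \<Phi>_cong[of f "restr f"] that by (simp add: R_def restr_eq f0)
  qed
qed

theorem corollary2:
  fixes n k j :: nat and rho m :: real
  assumes "n \<ge> 1" and "k \<ge> 2" and "0 < rho" and "rho < 1"
    and "j \<le> 2 ^ n" and "m = real j / 2 ^ n"
  shows "\<exists>g. monotone_cube n g \<and> cube_mean n g = m \<and>
           (\<forall>f. cube_mean n f = m \<longrightarrow> agree_prob n k rho f \<le> agree_prob n k rho g)"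
proof -
  obtain S where "S \<subseteq> cube n" "card S = j"
    using obtain_subset_with_card_n[of j "cube n"] assms(5) by (auto simp: card_cube)
  then have "cube_mean n (\<lambda>x. x \<in> S) = m"
    using assms(6) by (simp add: cube_mean_indicator)
  then obtain f0 where f0: "cube_mean n f0 = m"
    and max: "\<And>f. cube_mean n f = m \<Longrightarrow> agree_prob n k rho f \<le> agree_prob n k rho f0"
    by (rule ex_maximizer_on_cube[where \<Phi> = "agree_prob n k rho"])
       (auto intro: cube_mean_cong agree_prob_cong)
  have "agree_prob n k rho f0 \<le> agree_prob n k rho (compress_upto n f0)"
    using assms by (intro agree_prob_le_compress_upto) auto
  then show ?thesis
    using f0 max monotone_cube_compress_upto cube_mean_compress_upto[of n n f0]
    by (intro exI[of _ "compress_upto n f0"]) (auto intro: order_trans)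
qed

end
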